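(* Let $D$ be an integral domain and let $T$ be a $t$-Jaffard overring of $D$. Then for every fractional ideal $I$ of $D$ we have $(D:I)T=(T:IT)$.
   Context: $K$ is the quotient field of $D$; an overring is a ring between $D$ and $K$, flat if flat as a $D$-module. For $D$-submodules, $(A:B)=\{x\in K\mid xB\subseteq A\}$. A family $\Theta$ of overrings of $D$ is a $t$-Jaffard family if: either $\Theta=\{K\}$ or $K\notin\Theta$; every $T\in\Theta$ is flat over $D$; $\Theta$ is independent ($TT'=K$ for distinct $T,T'\in\Theta$); $\Theta$ is locally finite (every nonzero $x\in D$ is a nonunit in only finitely many $T\in\Theta$); and $\bigcap_{T\in\Theta}T=D$. A $t$-Jaffard overring is a member of some $t$-Jaffard family of $D$. *)

theory Defs
  imports Main
begin

text \<open>Convention: the integral domain D is represented as a subring of a field 'k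
  whose elements are exactly the quotients of elements of D, i.e. 'k (= UNIV) is the
  quotient field K of D.\<close>

definition subring_of :: "'k::field set \<Rightarrow> bool" where
  "subring_of R \<longleftrightarrow> 0 \<in> R \<and> 1 \<in> R \<and> (\<forall>x\<in>R. \<forall>y\<in>R. x + y \<in> R \<and> x * y \<in> R) \<and> (\<forall>x\<in>R. - x \<in> R)"

definition is_quotient_field_of :: "'k::field set \<Rightarrow> bool" where
  "is_quotient_field_of D \<longleftrightarrow> (\<forall>x. \<exists>a\<in>D. \<exists>b\<in>D. b \<noteq> 0 \<and> x = a / b)"

definition overring :: "'k::field set \<Rightarrow> 'k set \<Rightarrow> bool" where
  "overring D T \<longleftrightarrow> subring_of T \<and> D \<subseteq> T"

definition set_prod :: "'k::field set \<Rightarrow> 'k set \<Rightarrow> 'k set" where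
  "set_prod A B = {x. \<exists>(n::nat) (f::nat \<Rightarrow> 'k) g. (\<forall>i<n. f i \<in> A \<and> g i \<in> B) \<and> x = (\<Sum>i<n. f i * g i)}"

definition colon :: "'k::field set \<Rightarrow> 'k set \<Rightarrow> 'k set" where
  "colon A B = {x. \<forall>b\<in>B. x * b \<in> A}"

text \<open>Flatness of T as a D-module, via the equational criterion of flatness.\<close>
definition flat_over :: "'k::field set \<Rightarrow> 'k set \<Rightarrow> bool" where
  "flat_over D T \<longleftrightarrow>
    (\<forall>(n::nat) (a::nat \<Rightarrow> 'k) (x::nat \<Rightarrow> 'k). (\<forall>i<n. a i \<in> D \<and> x i \<in> T) \<and> (\<Sum>i<n. a i * x i) = 0 \<longrightarrow>
       (\<exists>(m::nat) (b::nat \<Rightarrow> nat \<Rightarrow> 'k) (y::nat \<Rightarrow> 'k). (\<forall>j<m. y j \<in> T) \<and> (\<forall>i<n. \<forall>j<m. b i j \<in> D) \<and>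
           (\<forall>i<n. x i = (\<Sum>j<m. b i j * y j)) \<and>
           (\<forall>j<m. (\<Sum>i<n. a i * b i j) = 0)))"

definition is_unit_in :: "'k::field set \<Rightarrow> 'k \<Rightarrow> bool" where
  "is_unit_in T x \<longleftrightarrow> (\<exists>y\<in>T. x * y = 1)"

definition t_Jaffard_family :: "'k::field set \<Rightarrow> 'k set set \<Rightarrow> bool" where
  "t_Jaffard_family D \<Theta> \<longleftrightarrow>
     (\<Theta> = {UNIV} \<or> UNIV \<notin> \<Theta>) \<and>
     (\<forall>T\<in>\<Theta>. overring D T \<and> flat_over D T) \<and>
     (\<forall>T\<in>\<Theta>. \<forall>T'\<in>\<Theta>. T \<noteq> T' \<longrightarrow> set_prod T T' = UNIV) \<and>
     (\<forall>x\<in>D. x \<noteq> 0 \<longrightarrow> finite {T\<in>\<Theta>. \<not> is_unit_in T x}) \<and>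
     \<Inter>\<Theta> = D"

definition t_Jaffard_overring :: "'k::field set \<Rightarrow> 'k set \<Rightarrow> bool" where
  "t_Jaffard_overring D T \<longleftrightarrow> (\<exists>\<Theta>. t_Jaffard_family D \<Theta> \<and> T \<in> \<Theta>)"

definition fractional_ideal :: "'k::field set \<Rightarrow> 'k set \<Rightarrow> bool" where
  "fractional_ideal D I \<longleftrightarrow>
     0 \<in> I \<and> (\<forall>x\<in>I. \<forall>y\<in>I. x + y \<in> I) \<and> (\<forall>r\<in>D. \<forall>x\<in>I. r * x \<in> I) \<and>
     I \<noteq> {0} \<and> (\<exists>d\<in>D. d \<noteq> 0 \<and> (\<forall>x\<in>I. d * x \<in> D))"

end

theory Submission
  imports Defs
begin

text \<open>The inclusion \<open>(D:I)T \<subseteq> (T:IT)\<close> holds for every overring. Conversely, let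
  \<open>x \<in> (T:IT)\<close> and write \<open>x = (a/b) d\<close> with \<open>dI \<subseteq> D\<close>. Only finitely many members
  \<open>S \<noteq> T\<close> of the family fail to contain \<open>1/b\<close>; for each of them \<open>TS = K\<close>, and flatness of \<open>T\<close>
  turns a relation \<open>1/b = \<Sum> f\<^sub>i g\<^sub>i\<close> into \<open>1 \<in> (D \<inter> bS)T\<close>. Multiplying these finitely many
  relations gives \<open>1 = \<Sum> u\<^sub>j t\<^sub>j\<close> with \<open>u\<^sub>j \<in> D\<close>, \<open>t\<^sub>j \<in> T\<close> and \<open>u\<^sub>j/b\<close> in every \<open>S \<noteq> T\<close>.
  Then \<open>u\<^sub>j x I\<close> lies in every member of the family, hence in \<open>D\<close>, so \<open>x = \<Sum> (u\<^sub>j x) t\<^sub>j \<in> (D:I)T\<close>.\<close>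

lemma
  assumes "subring_of R" and "x \<in> R" and "y \<in> R"
  shows subring_of_add: "x + y \<in> R"
    and subring_of_mult: "x * y \<in> R"
  using assms by (auto simp: subring_of_def)

lemma subring_of_one: "subring_of R \<Longrightarrow> 1 \<in> R"
  by (simp add: subring_of_def)

lemma subring_of_sum:
  assumes "subring_of R" and "\<forall>i<n. f i \<in> R"
  shows "(\<Sum>i<(n::nat). f i) \<in> R"
  using assms(2) by (induction n) (use assms(1) in \<open>auto simp: subring_of_def\<close>)

lemma subring_of_div_unit:
  assumes "subring_of R" and "is_unit_in R b" and "u \<in> R"
  shows "u / b \<in> R"
proof -
  obtain y where "y \<in> R" and "b * y = 1"
    using assms(2) unfolding is_unit_in_def by blast
  then have "u / b = u * y"
    by (simp add: divide_inverse inverse_unique)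
  with \<open>y \<in> R\<close> show ?thesis
    using assms(1,3) by (simp add: subring_of_mult)
qed

lemma
  assumes "t_Jaffard_family D \<Theta>" and "S \<in> \<Theta>"
  shows t_Jaffard_family_subring: "subring_of S"
    and t_Jaffard_family_subset: "D \<subseteq> S"
    and t_Jaffard_family_flat: "flat_over D S"
  using assms by (auto simp: t_Jaffard_family_def overring_def)

lemma t_Jaffard_family_comaximal:
  "t_Jaffard_family D \<Theta> \<Longrightarrow> S \<in> \<Theta> \<Longrightarrow> S' \<in> \<Theta> \<Longrightarrow> S \<noteq> S' \<Longrightarrow> set_prod S S' = UNIV"
  by (simp add: t_Jaffard_family_def)

lemma t_Jaffard_family_finite_nonunits:
  "t_Jaffard_family D \<Theta> \<Longrightarrow> x \<in> D \<Longrightarrow> x \<noteq> 0 \<Longrightarrow> finite {S\<in>\<Theta>. \<not> is_unit_in S x}"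
  by (simp add: t_Jaffard_family_def)

lemma t_Jaffard_family_Inter: "t_Jaffard_family D \<Theta> \<Longrightarrow> \<Inter>\<Theta> = D"
  by (simp add: t_Jaffard_family_def)

lemma sum_in_set_prod:
  "\<forall>i<(n::nat). f i \<in> A \<and> g i \<in> B \<Longrightarrow> (\<Sum>i<n. f i * g i) \<in> set_prod A B"
  unfolding set_prod_def by blast

lemma zero_in_set_prod: "0 \<in> set_prod A B"
  using sum_in_set_prod[of 0] by simp

lemma set_prod_add_mult:
  assumes "x \<in> set_prod A B" and "a \<in> A" and "b \<in> B"
  shows "x + a * b \<in> set_prod A B"
proof -
  obtain n :: nat and f g where fg: "\<forall>i<n. f i \<in> A \<and> g i \<in> B" and x: "x = (\<Sum>i<n. f i * g i)"
    using assms(1) unfolding set_prod_def by blast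
  have "x + a * b = (\<Sum>i<Suc n. (f(n := a)) i * (g(n := b)) i)"
    using x by simp
  also have "\<dots> \<in> set_prod A B"
    using fg assms(2,3) by (intro sum_in_set_prod) (auto simp: less_Suc_eq)
  finally show ?thesis .
qed

lemma mult_in_set_prod: "a \<in> A \<Longrightarrow> b \<in> B \<Longrightarrow> a * b \<in> set_prod A B"
  using set_prod_add_mult[OF zero_in_set_prod] by simp

lemma set_prod_induct [consumes 1, case_names zero add_mult]:
  assumes "z \<in> set_prod A B" and "P 0"
    and add_mult: "\<And>x a b. P x \<Longrightarrow> a \<in> A \<Longrightarrow> b \<in> B \<Longrightarrow> P (x + a * b)"
  shows "P z"
proof -
  obtain n :: nat and f g where fg: "\<forall>i<n. f i \<in> A \<and> g i \<in> B" and z: "z = (\<Sum>i<n. f i * g i)"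
    using assms(1) unfolding set_prod_def by blast
  have "(\<forall>i<n. f i \<in> A \<and> g i \<in> B) \<longrightarrow> P (\<Sum>i<n. f i * g i)"
    by (induction n) (simp_all add: assms(2) add_mult less_Suc_eq)
  with fg z show ?thesis
    by simp
qed

lemma set_prod_add:
  assumes "x \<in> set_prod A B" and "y \<in> set_prod A B"
  shows "x + y \<in> set_prod A B"
  using assms(2)
proof (induction rule: set_prod_induct)
  case zero
  then show ?case using assms(1) by simp
next
  case (add_mult y a b)
  then show ?case by (simp flip: add.assoc add: set_prod_add_mult)
qed

lemma set_prod_mono: "A \<subseteq> A' \<Longrightarrow> set_prod A B \<subseteq> set_prod A' B"
  unfolding set_prod_def by blast

lemma set_prod_mult:
  assumes "x \<in> set_prod A B" and "y \<in> set_prod A' B'"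
    and "\<And>a a'. a \<in> A \<Longrightarrow> a' \<in> A' \<Longrightarrow> a * a' \<in> A''"
    and "\<And>b b'. b \<in> B \<Longrightarrow> b' \<in> B' \<Longrightarrow> b * b' \<in> B''"
  shows "x * y \<in> set_prod A'' B''"
  using assms(1)
proof (induction rule: set_prod_induct)
  case zero
  then show ?case by (simp add: zero_in_set_prod)
next
  case (add_mult x a b)
  have "a * b * y \<in> set_prod A'' B''"
    using assms(2)
  proof (induction rule: set_prod_induct)
    case zero
    then show ?case by (simp add: zero_in_set_prod)
  next
    case (add_mult z a' b')
    have "a * b * z + (a * a') * (b * b') \<in> set_prod A'' B''"
      using add_mult \<open>a \<in> A\<close> \<open>b \<in> B\<close> by (intro set_prod_add_mult assms(3,4))
    then show ?case
      by (simp add: algebra_simps)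
  qed
  with add_mult.IH have "x * y + a * b * y \<in> set_prod A'' B''"
    by (rule set_prod_add)
  then show ?case
    by (simp add: distrib_right)
qed

lemma set_prod_scale:
  assumes "1 \<in> set_prod A B" and "\<And>a. a \<in> A \<Longrightarrow> x * a \<in> C"
  shows "x \<in> set_prod C B"
proof -
  have "z \<in> set_prod A B \<Longrightarrow> x * z \<in> set_prod C B" for z
  proof (induction rule: set_prod_induct)
    case zero
    then show ?case by (simp add: zero_in_set_prod)
  next
    case (add_mult z a b)
    then have "x * z + (x * a) * b \<in> set_prod C B"
      by (intro set_prod_add_mult assms(2))
    then show ?case
      by (simp add: algebra_simps)
  qed
  from this[OF assms(1)] show ?thesis
    by simp
qed

lemma set_prod_subset_subring:
  assumes "subring_of T" and "D \<subseteq> T"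
  shows "set_prod D T \<subseteq> T"
proof
  fix z assume "z \<in> set_prod D T"
  then show "z \<in> T"
  proof (induction rule: set_prod_induct)
    case zero
    then show ?case using assms(1) by (simp add: subring_of_def)
  next
    case (add_mult x a b)
    then show ?case using assms by (blast intro: subring_of_add subring_of_mult)
  qed
qed

lemma common_denominator:
  assumes "subring_of D" and "is_quotient_field_of D"
  shows "\<exists>c\<in>D. c \<noteq> 0 \<and> (\<forall>i<(n::nat). c * g i \<in> D)"
proof (induction n)
  case 0
  show ?case using subring_of_one[OF assms(1)] by (intro bexI[of _ 1]) auto
next
  case (Suc n)
  then obtain c where c: "c \<in> D" "c \<noteq> 0" "\<forall>i<n. c * g i \<in> D"
    by blast
  obtain p q where pq: "p \<in> D" "q \<in> D" "q \<noteq> 0" "g n = p / q"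
    using assms(2) unfolding is_quotient_field_of_def by blast
  have "c * q * g i \<in> D" if "i < Suc n" for i
  proof (cases "i < n")
    case True
    then have "q * (c * g i) \<in> D"
      using c pq assms(1) subring_of_mult by blast
    then show ?thesis by (simp add: mult_ac)
  next
    case False
    with \<open>i < Suc n\<close> have "i = n" by simp
    then have "c * q * g i = c * p"
      using pq by simp
    moreover have "c * p \<in> D"
      using c pq assms(1) subring_of_mult by blast
    ultimately show ?thesis by (simp only:)
  qed
  moreover have "c * q \<in> D" "c * q \<noteq> 0"
    using c pq assms(1) subring_of_mult by auto
  ultimately show ?case by blast
qed

text \<open>The set below is the conductor \<open>((a\<^sub>1, \<dots>, a\<^sub>n) :\<^sub>D c)\<close>. Since \<open>c = \<Sum> a\<^sub>i x\<^sub>i\<close> lies in the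
  extension of \<open>(a\<^sub>1, \<dots>, a\<^sub>n)\<close>, flatness makes the extension of the conductor all of \<open>T\<close>.\<close>

lemma flat_over_one_in_set_prod_conductor:
  fixes D T :: "'k::field set"
  assumes "subring_of D" and "flat_over D T" and "1 \<in> T" and "c \<in> D"
    and "\<forall>i<(n::nat). a i \<in> D \<and> x i \<in> T" and "(\<Sum>i<n. a i * x i) = c"
  shows "1 \<in> set_prod {u\<in>D. \<exists>\<beta>. (\<forall>i<n. \<beta> i \<in> D) \<and> c * u = (\<Sum>i<n. a i * \<beta> i)} T"
proof -
  define a' where "a' i = (if i < n then a i else - c)" for i
  define x' where "x' i = (if i < n then x i else 1)" for i
  have mem: "\<forall>i<Suc n. a' i \<in> D \<and> x' i \<in> T"
    using assms(1,3,4,5) by (auto simp: a'_def x'_def less_Suc_eq subring_of_def)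
  have "(\<Sum>i<Suc n. a' i * x' i) = 0"
    using assms(6) by (simp add: a'_def x'_def)
  then obtain m :: nat and \<beta> y where y: "\<forall>j<m. y j \<in> T"
    and \<beta>: "\<forall>i<Suc n. \<forall>j<m. \<beta> i j \<in> D"
    and x': "\<forall>i<Suc n. x' i = (\<Sum>j<m. \<beta> i j * y j)"
    and rel: "\<forall>j<m. (\<Sum>i<Suc n. a' i * \<beta> i j) = 0"
    using assms(2)[unfolded flat_over_def, rule_format, OF conjI[OF mem]] by blast
  have "1 = (\<Sum>j<m. \<beta> n j * y j)"
    using x'[rule_format, of n] by (simp add: x'_def)
  also have "\<dots> \<in> set_prod {u\<in>D. \<exists>\<beta>. (\<forall>i<n. \<beta> i \<in> D) \<and> c * u = (\<Sum>i<n. a i * \<beta> i)} T"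
  proof (intro sum_in_set_prod allI impI conjI)
    fix j assume "j < m"
    then have "c * \<beta> n j = (\<Sum>i<n. a i * \<beta> i j)"
      using rel by (simp add: a'_def)
    with \<open>j < m\<close> show "\<beta> n j \<in> {u\<in>D. \<exists>\<beta>. (\<forall>i<n. \<beta> i \<in> D) \<and> c * u = (\<Sum>i<n. a i * \<beta> i)}"
      using \<beta> by (intro CollectI conjI exI[of _ "\<lambda>i. \<beta> i j"]) auto
    show "y j \<in> T"
      using y \<open>j < m\<close> by blast
  qed
  finally show ?thesis .
qed

lemma one_in_set_prod_of_comaximal:
  fixes D T S :: "'k::field set"
  assumes D: "subring_of D" "is_quotient_field_of D"
    and T: "subring_of T" "flat_over D T"
    and S: "subring_of S" "D \<subseteq> S"
    and comaximal: "set_prod T S = UNIV"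
    and b: "b \<in> D" "b \<noteq> 0"
  shows "1 \<in> set_prod {u\<in>D. u / b \<in> S} T"
proof -
  obtain n :: nat and f g where fg: "\<forall>i<n. f i \<in> T \<and> g i \<in> S"
    and inverse_b: "1 / b = (\<Sum>i<n. f i * g i)"
    using comaximal unfolding set_prod_def by blast
  obtain c where c: "c \<in> D" "c \<noteq> 0" "\<forall>i<n. c * g i \<in> D"
    using common_denominator[OF D] by blast
  have "\<forall>i<n. c * b * g i \<in> D \<and> f i \<in> T"
    using c b fg D(1) subring_of_mult by (metis mult.assoc mult.left_commute)
  moreover have "(\<Sum>i<n. c * b * g i * f i) = c"
  proof -
    have "(\<Sum>i<n. c * b * g i * f i) = c * b * (\<Sum>i<n. f i * g i)"
      by (simp add: sum_distrib_left mult_ac)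
    also have "\<dots> = c"
      using b(2) by (simp flip: inverse_b)
    finally show ?thesis .
  qed
  ultimately have conductor: "1 \<in> set_prod
      {u\<in>D. \<exists>\<beta>. (\<forall>i<n. \<beta> i \<in> D) \<and> c * u = (\<Sum>i<n. c * b * g i * \<beta> i)} T"
    by (rule flat_over_one_in_set_prod_conductor[OF D(1) T(2) subring_of_one[OF T(1)] c(1)])
  have "{u\<in>D. \<exists>\<beta>. (\<forall>i<n. \<beta> i \<in> D) \<and> c * u = (\<Sum>i<n. c * b * g i * \<beta> i)}
      \<subseteq> {u\<in>D. u / b \<in> S}"
  proof clarify
    fix u \<beta> assume "u \<in> D" and \<beta>: "\<forall>i<n. \<beta> i \<in> D"
      and u: "c * u = (\<Sum>i<n. c * b * g i * \<beta> i)"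
    have "c * u = c * (b * (\<Sum>i<n. g i * \<beta> i))"
      using u by (simp add: sum_distrib_left mult_ac)
    then have "u / b = (\<Sum>i<n. g i * \<beta> i)"
      using b(2) c(2) by simp
    also have "\<dots> \<in> S"
      using fg \<beta> S by (intro subring_of_sum) (auto intro: subring_of_mult)
    finally show "u / b \<in> S" .
  qed
  with conductor show ?thesis
    using set_prod_mono by blast
qed

lemma one_in_set_prod_Int:
  assumes "1 \<in> set_prod A T" and "1 \<in> set_prod B T" and "subring_of T"
    and "\<And>a b. a \<in> A \<Longrightarrow> b \<in> B \<Longrightarrow> a * b \<in> A \<inter> B"
  shows "1 \<in> set_prod (A \<inter> B) T"
proof -
  have "1 * 1 \<in> set_prod (A \<inter> B) T"
    using assms by (intro set_prod_mult[OF assms(1,2)]) (auto intro: subring_of_mult)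
  then show ?thesis by simp
qed

lemma t_Jaffard_family_one_in_set_prod:
  fixes D T :: "'k::field set"
  assumes D: "subring_of D" "is_quotient_field_of D"
    and \<Theta>: "t_Jaffard_family D \<Theta>" "T \<in> \<Theta>"
    and b: "b \<in> D" "b \<noteq> 0"
    and G: "finite G" "G \<subseteq> \<Theta> - {T}"
  shows "1 \<in> set_prod {u\<in>D. \<forall>S\<in>G. u / b \<in> S} T"
  using G
proof (induction G rule: finite_induct)
  case empty
  have "1 * 1 \<in> set_prod D T"
    using subring_of_one[OF D(1)] subring_of_one[OF t_Jaffard_family_subring[OF \<Theta>]]
    by (rule mult_in_set_prod)
  then show ?case by simp
next
  case (insert S G)
  have S: "S \<in> \<Theta>" "T \<noteq> S"
    using insert.prems by auto
  have "1 \<in> set_prod ({u\<in>D. \<forall>S'\<in>G. u / b \<in> S'} \<inter> {u\<in>D. u / b \<in> S}) T"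
  proof (rule one_in_set_prod_Int)
    show "1 \<in> set_prod {u\<in>D. \<forall>S'\<in>G. u / b \<in> S'} T"
      using insert by blast
    show "1 \<in> set_prod {u\<in>D. u / b \<in> S} T"
      using \<Theta> S by (intro one_in_set_prod_of_comaximal D b t_Jaffard_family_comaximal
          t_Jaffard_family_subring t_Jaffard_family_flat t_Jaffard_family_subset)
    show "subring_of T"
      using \<Theta> by (rule t_Jaffard_family_subring)
  next
    fix u v assume u: "u \<in> {u\<in>D. \<forall>S'\<in>G. u / b \<in> S'}" and v: "v \<in> {u\<in>D. u / b \<in> S}"
    have "u * v / b \<in> S'" if "S' \<in> G" for S'
    proof -
      have "S' \<in> \<Theta>" using insert.prems that by blast
      then have "(u / b) * v \<in> S'"
        using \<Theta>(1) u v that by (blast intro: subring_of_mult t_Jaffard_family_subring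
            dest: t_Jaffard_family_subset)
      then show ?thesis by simp
    qed
    moreover have "u * (v / b) \<in> S"
      using \<Theta>(1) S(1) u v by (blast intro: subring_of_mult t_Jaffard_family_subring
          dest: t_Jaffard_family_subset)
    ultimately show "u * v \<in> {u\<in>D. \<forall>S'\<in>G. u / b \<in> S'} \<inter> {u\<in>D. u / b \<in> S}"
      using u v D(1) by (auto intro: subring_of_mult)
  qed
  moreover have "{u\<in>D. \<forall>S'\<in>insert S G. u / b \<in> S'}
      = {u\<in>D. \<forall>S'\<in>G. u / b \<in> S'} \<inter> {u\<in>D. u / b \<in> S}"
    by blast
  ultimately show ?case by simp
qed

lemma mult_in_colon_of_Inter:
  fixes D T I :: "'k::field set"
  assumes \<Theta>: "\<Inter>\<Theta> = D" "\<And>S. S \<in> \<Theta> \<Longrightarrow> subring_of S \<and> D \<subseteq> S" "T \<in> \<Theta>"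
    and x: "\<forall>i\<in>I. x * i \<in> T" "x = a / b * d" "a \<in> D" "\<forall>i\<in>I. d * i \<in> D"
    and u: "u \<in> D" "\<forall>S\<in>\<Theta> - {T}. u / b \<in> S"
  shows "u * x \<in> colon D I"
  unfolding colon_def
proof (intro CollectI ballI)
  fix i assume "i \<in> I"
  have "u * x * i \<in> S" if "S \<in> \<Theta>" for S
  proof (cases "S = T")
    case True
    then have "u * (x * i) \<in> S"
      using \<Theta> x(1) u(1) \<open>i \<in> I\<close> by (blast intro: subring_of_mult)
    then show ?thesis by (simp add: mult.assoc)
  next
    case False
    then have "u / b * a * (d * i) \<in> S"
      using \<Theta>(2)[OF that] x(3,4) u(2) that \<open>i \<in> I\<close> by (blast intro: subring_of_mult)
    then show ?thesis
      using x(2) by (simp add: mult_ac)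
  qed
  then show "u * x * i \<in> D"
    using \<Theta>(1) by blast
qed

lemma set_prod_colon_subset:
  assumes "subring_of T" and "D \<subseteq> T"
  shows "set_prod (colon D I) T \<subseteq> colon T (set_prod I T)"
proof
  fix z assume z: "z \<in> set_prod (colon D I) T"
  have "z * w \<in> T" if "w \<in> set_prod I T" for w
  proof -
    have "z * w \<in> set_prod D T"
      using z that by (rule set_prod_mult) (auto simp: colon_def intro: subring_of_mult assms(1))
    then show ?thesis
      using set_prod_subset_subring[OF assms] by blast
  qed
  then show "z \<in> colon T (set_prod I T)"
    unfolding colon_def by blast
qed

lemma t_Jaffard_family_colon_subset:
  fixes D T I :: "'k::field set"
  assumes D: "subring_of D" "is_quotient_field_of D"
    and \<Theta>: "t_Jaffard_family D \<Theta>" "T \<in> \<Theta>"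
    and I: "fractional_ideal D I"
  shows "colon T (set_prod I T) \<subseteq> set_prod (colon D I) T"
proof
  fix x assume x: "x \<in> colon T (set_prod I T)"
  have xI: "\<forall>i\<in>I. x * i \<in> T"
  proof
    fix i assume "i \<in> I"
    then have "i * 1 \<in> set_prod I T"
      using \<Theta> by (intro mult_in_set_prod subring_of_one t_Jaffard_family_subring)
    then show "x * i \<in> T"
      using x unfolding colon_def by simp
  qed
  obtain d where d: "d \<in> D" "d \<noteq> 0" "\<forall>i\<in>I. d * i \<in> D"
    using I unfolding fractional_ideal_def by blast
  obtain a b where ab: "a \<in> D" "b \<in> D" "b \<noteq> 0" "x / d = a / b"
    using D(2) unfolding is_quotient_field_of_def by blast
  define G where "G = {S\<in>\<Theta>. \<not> is_unit_in S b} - {T}"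
  have "finite G"
    unfolding G_def using t_Jaffard_family_finite_nonunits[OF \<Theta>(1) ab(2,3)] by blast
  then have "1 \<in> set_prod {u\<in>D. \<forall>S\<in>G. u / b \<in> S} T"
    using D \<Theta> ab(2,3) by (intro t_Jaffard_family_one_in_set_prod) (auto simp: G_def)
  then show "x \<in> set_prod (colon D I) T"
  proof (rule set_prod_scale)
    fix u assume u: "u \<in> {u\<in>D. \<forall>S\<in>G. u / b \<in> S}"
    have "u / b \<in> S" if "S \<in> \<Theta> - {T}" for S
    proof (cases "S \<in> G")
      case False
      with that have "is_unit_in S b"
        unfolding G_def by blast
      then show ?thesis
        using u that \<Theta>(1) by (blast intro: subring_of_div_unit t_Jaffard_family_subring
            dest: t_Jaffard_family_subset)
    qed (use u in blast)
    moreover have "x = a / b * d"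
      using ab(4) d(2) by (simp add: field_simps)
    ultimately have "u * x \<in> colon D I"
      using u xI ab(1) d(3) \<Theta> t_Jaffard_family_subring t_Jaffard_family_subset
      by (intro mult_in_colon_of_Inter[where \<Theta> = \<Theta> and T = T]) (auto dest: t_Jaffard_family_Inter)
    then show "x * u \<in> colon D I"
      by (simp add: mult.commute)
  qed
qed

theorem proposition3p2:
  fixes D T I :: "'k::field set"
  assumes "subring_of D"
    and "is_quotient_field_of D"
    and "t_Jaffard_overring D T"
    and "fractional_ideal D I"
  shows "set_prod (colon D I) T = colon T (set_prod I T)"
proof -
  obtain \<Theta> where \<Theta>: "t_Jaffard_family D \<Theta>" "T \<in> \<Theta>"
    using assms(3) unfolding t_Jaffard_overring_def by blast
  show ?thesis
  proof
    show "set_prod (colon D I) T \<subseteq> colon T (set_prod I T)"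
      using \<Theta> by (intro set_prod_colon_subset t_Jaffard_family_subring t_Jaffard_family_subset)
    show "colon T (set_prod I T) \<subseteq> set_prod (colon D I) T"
      using assms(1,2) \<Theta> assms(4) by (rule t_Jaffard_family_colon_subset)
  qed
qed

end
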